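(* Let $G$ be a finite, connected, simple, bridgeless, triangle-free cubic graph and let $\Lambda$ be a valid labeling of $\mathfrak{L}_2(G)$ such that no reduced clique is a self-intersection of any cycle in $\Gamma_\Lambda$. Then for every $\gamma\in\Gamma_\Lambda$ the projected walk $W_\gamma$ is a cycle of $G$.
   Context: $\mathcal{L}(H)$ is the line graph of $H$. Let $\mathcal{T}$ be the set of triangles of $\mathcal{L}(\mathcal{L}(G))$ formed by the three edges of a triangle of $\mathcal{L}(G)$. $\mathfrak{L}_2(G)$ has the vertex set of $\mathcal{L}(\mathcal{L}(G))$ and the edges of $\mathcal{L}(\mathcal{L}(G))$ not in any triangle of $\mathcal{T}$. For each edge $e$ of $G$, the reduced clique $\mathbb{X}_e$ is the subgraph of $\mathfrak{L}_2(G)$ on the four edges of $\mathcal{L}(G)$ incident to $e$, with all edges of $\mathfrak{L}_2(G)$ among them (a 4-cycle). A labeling $\Lambda$ gives each edge of $\mathfrak{L}_2(G)$ a label in $\{0,1\}$ ($1$ = open); it is valid if in every reduced clique each vertex is incident to two edges of that clique with different labels. $\Gamma_\Lambda$ is the set of connected components (cycles) of the subgraph formed by open edges. A reduced clique $\mathbb{X}$ is a self-intersection of $\gamma\in\Gamma_\Lambda$ if both open edges of $\mathbb{X}$ lie on $\gamma$. Projected walk: each vertex $f$ of $\mathfrak{L}_2(G)$ is an unordered pair of distinct edges of $G$ sharing an endpoint; if $\gamma$ has vertices $f_1,\dots,f_m$ in cyclic order, consecutive $f_j,f_{j+1}$ (indices mod $m$) share exactly one edge $e_j$ of $G$, and $W_\gamma$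 is the cyclic sequence $(e_1,\dots,e_m)$. *)

theory Defs
  imports Main
begin

definition simple_graph :: "'a set \<Rightarrow> 'a set set \<Rightarrow> bool" where
  "simple_graph V E \<longleftrightarrow> finite V \<and>
     (\<forall>e\<in>E. \<exists>u v. u \<noteq> v \<and> u \<in> V \<and> v \<in> V \<and> e = {u, v})"

definition cubic :: "'a set \<Rightarrow> 'a set set \<Rightarrow> bool" where
  "cubic V E \<longleftrightarrow> (\<forall>v\<in>V. card {e\<in>E. v \<in> e} = 3)"

definition graph_connected :: "'a set \<Rightarrow> 'a set set \<Rightarrow> bool" where
  "graph_connected V E \<longleftrightarrow>
     (\<forall>u\<in>V. \<forall>v\<in>V. (u, v) \<in> {(x, y). {x, y} \<in> E}\<^sup>*)"

definition bridgeless :: "'a set \<Rightarrow> 'a set set \<Rightarrow> bool" where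
  "bridgeless V E \<longleftrightarrow> (\<forall>e\<in>E. graph_connected V (E - {e}))"

definition triangle_free :: "'a set set \<Rightarrow> bool" where
  "triangle_free E \<longleftrightarrow> \<not> (\<exists>a b c. {a, b} \<in> E \<and> {b, c} \<in> E \<and> {a, c} \<in> E)"

text \<open>Edge set of the line graph of a graph with edge set E (its vertex set is E).\<close>
definition line_edges :: "'b set set \<Rightarrow> 'b set set set" where
  "line_edges E = {{e, f} | e f. e \<in> E \<and> f \<in> E \<and> e \<noteq> f \<and> e \<inter> f \<noteq> {}}"

text \<open>Edges of the reduced double line graph: edges of L(L(G)) not lying in any
  triangle of L(L(G)) formed by the three edges of a triangle of L(G).
  Its vertex set is line_edges E.\<close>
definition L2_edges :: "'a set set \<Rightarrow> 'a set set set set" where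
  "L2_edges E = {a \<in> line_edges (line_edges E).
      \<not> (\<exists>x y z. {x, y} \<in> line_edges E \<and> {y, z} \<in> line_edges E \<and> {x, z} \<in> line_edges E \<and>
               a \<in> {{{x, y}, {y, z}}, {{y, z}, {x, z}}, {{x, y}, {x, z}}})}"

definition clique_verts :: "'a set set \<Rightarrow> 'a set \<Rightarrow> 'a set set set" where
  "clique_verts E e = {f \<in> line_edges E. e \<in> f}"

definition clique_edges :: "'a set set \<Rightarrow> 'a set \<Rightarrow> 'a set set set set" where
  "clique_edges E e = {a \<in> L2_edges E. a \<subseteq> clique_verts E e}"

text \<open>Labelings: True = open (label 1), False = label 0.\<close>
definition valid_labeling :: "'a set set \<Rightarrow> ('a set set set \<Rightarrow> bool) \<Rightarrow> bool" where
  "valid_labeling E \<Lambda> \<longleftrightarrow> (\<forall>e\<in>E. \<forall>v\<in>clique_verts E e. \<exists>a b.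
      a \<in> clique_edges E e \<and> b \<in> clique_edges E e \<and> v \<in> a \<and> v \<in> b \<and> \<Lambda> a \<noteq> \<Lambda> b)"

definition open_edges :: "'a set set \<Rightarrow> ('a set set set \<Rightarrow> bool) \<Rightarrow> 'a set set set set" where
  "open_edges E \<Lambda> = {a \<in> L2_edges E. \<Lambda> a}"

text \<open>Connected components of the open subgraph, each represented by its vertex set.\<close>
definition Gamma :: "'a set set \<Rightarrow> ('a set set set \<Rightarrow> bool) \<Rightarrow> 'a set set set set" where
  "Gamma E \<Lambda> = {{w. (u, w) \<in> {(x, y). {x, y} \<in> open_edges E \<Lambda>}\<^sup>*} | u. u \<in> \<Union>(open_edges E \<Lambda>)}"

text \<open>The reduced clique X_e is a self-intersection of the component with vertex set C
  if (both) open edges of X_e lie on that component.\<close>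
definition self_intersection :: "'a set set \<Rightarrow> ('a set set set \<Rightarrow> bool) \<Rightarrow> 'a set \<Rightarrow> 'a set set set \<Rightarrow> bool" where
  "self_intersection E \<Lambda> e C \<longleftrightarrow> (\<forall>a\<in>clique_edges E e. \<Lambda> a \<longrightarrow> a \<subseteq> C)"

definition cyclic_order :: "'a set set \<Rightarrow> ('a set set set \<Rightarrow> bool) \<Rightarrow> 'a set set set \<Rightarrow> 'a set set list \<Rightarrow> bool" where
  "cyclic_order E \<Lambda> C fs \<longleftrightarrow> distinct fs \<and> set fs = C \<and>
     (\<forall>j < length fs. {fs ! j, fs ! ((j + 1) mod length fs)} \<in> open_edges E \<Lambda>)"

definition projected_walk :: "'a set set list \<Rightarrow> 'a set list" where
  "projected_walk fs = map (\<lambda>j. THE e. e \<in> fs ! j \<inter> fs ! ((j + 1) mod length fs)) [0..<length fs]"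

definition is_cycle :: "'a set \<Rightarrow> 'a set set \<Rightarrow> 'a set list \<Rightarrow> bool" where
  "is_cycle V E es \<longleftrightarrow> length es \<ge> 3 \<and> set es \<subseteq> E \<and>
     (\<exists>vs. length vs = length es \<and> distinct vs \<and> set vs \<subseteq> V \<and>
        (\<forall>j < length es. es ! j = {vs ! j, vs ! ((j + 1) mod length es)}))"

end

(* Let f_0, ..., f_(m-1) be the vertices of gamma in cyclic order and e_j the edge of G shared
   by f_j and f_(j+1), so that f_(j+1) = {e_j, e_(j+1)}.  The e_j are pairwise distinct: if
   e_j = e_k, the reduced clique X_(e_j) contains the two distinct open edges f_j f_(j+1) and
   f_k f_(k+1) of gamma, so at least three of its at most four vertices lie on gamma; an open
   edge of X_(e_j) off gamma would be disjoint from gamma and need two further vertices, so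
   X_(e_j) would be a self-intersection.  No three consecutive e_j share an endpoint, for then
   the open edge f_(j+1) f_(j+2) would lie in a triangle of L(L(G)) coming from a triangle of
   L(G).  Hence W_gamma is a closed trail, of length at least three by validity of the labeling,
   and in a graph of maximum degree three a closed trail cannot pass through a vertex twice,
   since that vertex would need four incident edges of the trail. *)

theory Submission
  imports Defs
begin

lemma card_2_eq_doubleton: "card f = 2 \<Longrightarrow> x \<in> f \<Longrightarrow> y \<in> f \<Longrightarrow> x \<noteq> y \<Longrightarrow> f = {x, y}"
  by (auto simp: card_2_iff)

lemma card_2_other_element: "card a = 2 \<Longrightarrow> x \<in> a \<Longrightarrow> \<exists>y. y \<noteq> x \<and> a = {x, y}"
  by (auto simp: card_2_iff)

lemma card_2_inter_singleton:
  assumes "card f = 2" "card g = 2" "f \<noteq> g" "f \<inter> g \<noteq> {}"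
  shows "\<exists>x. f \<inter> g = {x}"
  using assms by (auto simp: card_2_iff doubleton_eq_iff)

lemma card_ge_3_if_three_distinct:
  "finite T \<Longrightarrow> {x, y, z} \<subseteq> T \<Longrightarrow> x \<noteq> y \<Longrightarrow> x \<noteq> z \<Longrightarrow> y \<noteq> z \<Longrightarrow> 3 \<le> card T"
  using card_mono[of T "{x, y, z}"] by simp

lemma Suc_mod_neq_self: "2 \<le> m \<Longrightarrow> Suc a mod m \<noteq> a mod m"
  by (auto simp: mod_Suc)

lemma Suc_mod_eq_Suc_mod_iff: "Suc a mod m = Suc b mod m \<longleftrightarrow> a mod m = b mod m"
  by (cases "m = 0") (auto simp: mod_Suc)

lemma add_mod_eq_add_mod_iff: "(a + c) mod m = (b + c) mod m \<longleftrightarrow> a mod m = b mod m"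
  for a b c m :: nat
  by (induction c) (simp_all add: Suc_mod_eq_Suc_mod_iff)

lemma Suc_Suc_mod_neq_self: "3 \<le> m \<Longrightarrow> Suc (Suc a) mod m \<noteq> a mod m"
  using add_mod_eq_add_mod_iff[of 2 a m 0] by simp

definition cyclic_nth :: "'b list \<Rightarrow> nat \<Rightarrow> 'b" where
  "cyclic_nth xs j = xs ! (j mod length xs)"

lemma cyclic_nth_mod [simp]: "cyclic_nth xs (j mod length xs) = cyclic_nth xs j"
  by (simp add: cyclic_nth_def)

lemma cyclic_nth_eq_nth: "j < length xs \<Longrightarrow> cyclic_nth xs j = xs ! j"
  by (simp add: cyclic_nth_def)

lemma cyclic_nth_in_set: "xs \<noteq> [] \<Longrightarrow> cyclic_nth xs j \<in> set xs"
  by (simp add: cyclic_nth_def)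

lemma cyclic_nth_eq_iff:
  "distinct xs \<Longrightarrow> xs \<noteq> [] \<Longrightarrow>
    cyclic_nth xs a = cyclic_nth xs b \<longleftrightarrow> a mod length xs = b mod length xs"
  by (simp add: cyclic_nth_def nth_eq_iff_index_eq)

lemma card_consecutive_pairs_ge_3:
  assumes dist: "distinct xs" and len: "3 \<le> length xs"
    and ab: "a mod length xs \<noteq> b mod length xs"
  shows "3 \<le> card {cyclic_nth xs a, cyclic_nth xs (Suc a), cyclic_nth xs b, cyclic_nth xs (Suc b)}"
proof -
  let ?m = "length xs"
  have ne: "xs \<noteq> []" using len by auto
  note cyclic_eq = cyclic_nth_eq_iff[OF dist ne]
  show ?thesis
  proof (cases "Suc a mod ?m = b mod ?m")
    case True
    then have "Suc b mod ?m \<noteq> a mod ?m"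
      using Suc_Suc_mod_neq_self[OF len] Suc_mod_eq_Suc_mod_iff by metis
    moreover have "Suc b mod ?m \<noteq> b mod ?m" using Suc_mod_neq_self len by simp
    ultimately show ?thesis
      using ab
      by (intro card_ge_3_if_three_distinct[of _ "cyclic_nth xs a" "cyclic_nth xs b"
          "cyclic_nth xs (Suc b)"]) (auto simp: cyclic_eq)
  next
    case False
    moreover have "Suc a mod ?m \<noteq> a mod ?m" using Suc_mod_neq_self len by simp
    ultimately show ?thesis
      using ab
      by (intro card_ge_3_if_three_distinct[of _ "cyclic_nth xs a" "cyclic_nth xs (Suc a)"
          "cyclic_nth xs b"]) (auto simp: cyclic_eq)
  qed
qed

section \<open>Closed trails in subcubic graphs\<close>

lemma simple_graph_card_edge: "simple_graph V E \<Longrightarrow> e \<in> E \<Longrightarrow> card e = 2"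
  by (auto simp: simple_graph_def)

lemma simple_graph_edge_subset: "simple_graph V E \<Longrightarrow> e \<in> E \<Longrightarrow> e \<subseteq> V"
  by (force simp: simple_graph_def)

lemma simple_graph_finite_edges:
  assumes "simple_graph V E" shows "finite E"
proof (rule finite_subset)
  show "E \<subseteq> Pow V" using simple_graph_edge_subset[OF assms] by blast
  show "finite (Pow V)" using assms by (simp add: simple_graph_def)
qed

lemma is_cycle_if_periodic_vertices:
  assumes len: "3 \<le> length es" and sub: "set es \<subseteq> E" and in_V: "\<And>j. u j \<in> V"
    and u_eq_iff: "\<And>a b. u a = u b \<longleftrightarrow> a mod length es = b mod length es"
    and edge_eq: "\<And>j. cyclic_nth es (Suc j) = {u j, u (Suc j)}"
  shows "is_cycle V E es"
proof -
  define m where "m = length es"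
  define p where "p = m - 1"
  have m_Suc: "m = Suc p" using len by (simp add: m_def p_def)
  have u_mod: "u (j mod m) = u j" for j using u_eq_iff by (simp add: m_def)
  \<comment> \<open>Edge \<open>j\<close> joins \<open>u (j - 1)\<close> and \<open>u j\<close> (indices mod \<open>m\<close>); writing \<open>j - 1\<close> as
    \<open>j + p\<close> avoids truncated subtraction.\<close>
  define vs where "vs = map (\<lambda>j. u (j + p)) [0..<m]"
  have vs_cyclic: "cyclic_nth vs j = u (j + p)" for j
  proof -
    have "cyclic_nth vs j = u (j mod m + p)"
      using m_Suc by (simp add: cyclic_nth_def vs_def del: upt_Suc)
    also have "\<dots> = u ((j + p) mod m)" by (metis u_mod mod_add_left_eq)
    finally show ?thesis by (simp add: u_mod)
  qed
  have "es ! j = {vs ! j, vs ! ((j + 1) mod m)}" if "j < m" for j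
  proof -
    have "Suc (j + p) mod m = j" using that m_Suc by (metis add_Suc_right mod_add_self2 mod_less)
    then have "es ! j = cyclic_nth es (Suc (j + p))" by (simp add: cyclic_nth_def m_def)
    also have "\<dots> = {cyclic_nth vs j, cyclic_nth vs (Suc j)}" using edge_eq vs_cyclic by simp
    finally show ?thesis using that by (simp add: cyclic_nth_def vs_def)
  qed
  moreover have "distinct vs"
    by (auto simp: vs_def distinct_map inj_on_def u_eq_iff add_mod_eq_add_mod_iff m_def)
  moreover have "set vs \<subseteq> V" using in_V by (auto simp: vs_def)
  moreover have "length vs = m" by (simp add: vs_def)
  ultimately show ?thesis
    using len sub unfolding is_cycle_def m_def by blast
qed

lemma closed_trail_is_cycle_if_subcubic:
  assumes sg: "simple_graph V E" and subcubic: "\<forall>v\<in>V. card {e \<in> E. v \<in> e} \<le> 3"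
    and len: "length es \<ge> 3" and dist: "distinct es" and sub: "set es \<subseteq> E"
    and meet: "\<And>j. cyclic_nth es j \<inter> cyclic_nth es (Suc j) \<noteq> {}"
    and no_claw:
      "\<And>j. cyclic_nth es j \<inter> cyclic_nth es (Suc j) \<inter> cyclic_nth es (Suc (Suc j)) = {}"
  shows "is_cycle V E es"
proof -
  define m where "m = length es"
  have ne: "es \<noteq> []" using len by auto
  have edge: "cyclic_nth es j \<in> E" for j using cyclic_nth_in_set[OF ne] sub by blast
  have card_edge: "card (cyclic_nth es j) = 2" for j using simple_graph_card_edge[OF sg edge] .
  have es_eq_iff: "cyclic_nth es a = cyclic_nth es b \<longleftrightarrow> a mod m = b mod m" for a b
    using cyclic_nth_eq_iff[OF dist ne] m_def by simp
  define u where "u j = the_elem (cyclic_nth es j \<inter> cyclic_nth es (Suc j))" for j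
  have u: "cyclic_nth es j \<inter> cyclic_nth es (Suc j) = {u j}" for j
  proof -
    have "cyclic_nth es j \<noteq> cyclic_nth es (Suc j)"
      unfolding es_eq_iff using Suc_mod_neq_self[of m j] len m_def by simp
    then obtain x where "cyclic_nth es j \<inter> cyclic_nth es (Suc j) = {x}"
      using card_2_inter_singleton[OF card_edge card_edge _ meet] by blast
    then show ?thesis by (simp add: u_def)
  qed
  have u_mod: "u (j mod m) = u j" for j
    using cyclic_nth_mod[of es] m_def by (simp add: u_def cyclic_nth_def mod_Suc_eq)
  have u_neq_Suc: "u j \<noteq> u (Suc j)" for j
    using u[of j] u[of "Suc j"] no_claw[of j] by auto
  have u_in_V: "u j \<in> V" for j
    using simple_graph_edge_subset[OF sg edge[of j]] u[of j] by blast
  have u_inj: "a mod m = b mod m" if eq: "u a = u b" for a b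
  proof (rule ccontr)
    assume ab: "a mod m \<noteq> b mod m"
    have "Suc a mod m \<noteq> b mod m" "Suc b mod m \<noteq> a mod m"
      using u_mod u_neq_Suc eq by metis+
    then have card_S: "card {cyclic_nth es a, cyclic_nth es (Suc a),
        cyclic_nth es b, cyclic_nth es (Suc b)} = 4" (is "card ?S = 4")
      using ab Suc_mod_neq_self[of m a] Suc_mod_neq_self[of m b]
        Suc_mod_eq_Suc_mod_iff[of a m b] len m_def
      by (auto simp: es_eq_iff)
    have "card ?S \<le> card {e \<in> E. u a \<in> e}"
      using u[of a] u[of b] eq edge simple_graph_finite_edges[OF sg] by (intro card_mono) auto
    also have "\<dots> \<le> 3" using subcubic u_in_V by blast
    finally show False using card_S by simp
  qed
  show ?thesis
  proof (rule is_cycle_if_periodic_vertices[OF len sub u_in_V])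
    show "u a = u b \<longleftrightarrow> a mod length es = b mod length es" for a b
      using u_inj u_mod m_def by metis
    show "cyclic_nth es (Suc j) = {u j, u (Suc j)}" for j
      using card_2_eq_doubleton[OF card_edge] u[of j] u[of "Suc j"] u_neq_Suc by blast
  qed
qed

section \<open>Reduced cliques and open components\<close>

lemma doubleton_in_line_edges_iff:
  "{f, g} \<in> line_edges F \<longleftrightarrow> f \<in> F \<and> g \<in> F \<and> f \<noteq> g \<and> f \<inter> g \<noteq> {}"
  by (auto simp: line_edges_def doubleton_eq_iff)

lemma line_edges_card: "x \<in> line_edges F \<Longrightarrow> card x = 2"
  by (auto simp: line_edges_def card_2_iff)

lemma line_edges_subset: "x \<in> line_edges F \<Longrightarrow> x \<subseteq> F"
  by (auto simp: line_edges_def)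

lemma open_edge_in_line_edges: "a \<in> open_edges E \<Lambda> \<Longrightarrow> a \<in> line_edges (line_edges E)"
  by (simp add: open_edges_def L2_edges_def)

lemma L2_edge_not_in_triangle:
  assumes "{x, y} \<in> line_edges E" "{y, z} \<in> line_edges E" "{x, z} \<in> line_edges E"
  shows "{{x, y}, {y, z}} \<notin> L2_edges E"
  using assms unfolding L2_edges_def by blast

lemma Gamma_closed:
  assumes "C \<in> Gamma E \<Lambda>" "x \<in> C" "{x, y} \<in> open_edges E \<Lambda>"
  shows "y \<in> C"
proof -
  from assms(1) obtain u where "C = {w. (u, w) \<in> {(x, y). {x, y} \<in> open_edges E \<Lambda>}\<^sup>*}"
    by (auto simp: Gamma_def)
  with assms(2,3) show ?thesis
    by (auto intro: rtrancl_into_rtrancl)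
qed

lemma Gamma_three_vertices:
  assumes valid: "valid_labeling E \<Lambda>" and C: "C \<in> Gamma E \<Lambda>"
  shows "\<exists>x\<in>C. \<exists>y\<in>C. \<exists>z\<in>C. x \<noteq> y \<and> x \<noteq> z \<and> y \<noteq> z"
proof -
  from C obtain u a where uC: "u \<in> C" and a: "a \<in> open_edges E \<Lambda>" "u \<in> a"
    by (auto simp: Gamma_def)
  obtain v where v: "v \<noteq> u" "a = {u, v}"
    using card_2_other_element[OF line_edges_card[OF open_edge_in_line_edges[OF a(1)]] a(2)]
    by blast
  have vC: "v \<in> C" using Gamma_closed[OF C uC] a(1) v(2) by simp
  have uv: "u \<in> line_edges E" "v \<in> line_edges E" "u \<inter> v \<noteq> {}"
    using open_edge_in_line_edges[OF a(1)] v by (simp_all add: doubleton_in_line_edges_iff)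
  obtain e where e: "e \<in> u" "e \<in> v" using uv(3) by blast
  obtain g where g: "g \<noteq> e" "u = {e, g}"
    using card_2_other_element[OF line_edges_card[OF uv(1)] e(1)] by blast
  have "g \<in> E" using line_edges_subset[OF uv(1)] g(2) by blast
  moreover have "u \<in> clique_verts E g" using uv(1) g(2) by (simp add: clique_verts_def)
  ultimately obtain b where b: "b \<in> clique_edges E g" "u \<in> b" "\<Lambda> b"
    using valid unfolding valid_labeling_def by metis
  have b_open: "b \<in> open_edges E \<Lambda>" using b by (simp add: clique_edges_def open_edges_def)
  obtain h where h: "h \<noteq> u" "b = {u, h}"
    using card_2_other_element[OF line_edges_card[OF open_edge_in_line_edges[OF b_open]] b(2)]
    by blast
  have hC: "h \<in> C" using Gamma_closed[OF C uC] b_open h(2) by simp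
  have "g \<in> h" using b(1) h(2) by (auto simp: clique_edges_def clique_verts_def)
  have "h \<noteq> v"
  proof
    assume "h = v"
    then have "v = {e, g}"
      using card_2_eq_doubleton[OF line_edges_card[OF uv(2)]] e(2) \<open>g \<in> h\<close> g(1) by blast
    with g(2) v(1) show False by simp
  qed
  with uC vC hC v(1) h(1) show ?thesis by blast
qed

lemma clique_verts_card_le_4:
  assumes sg: "simple_graph V E" and subcubic: "\<forall>v\<in>V. card {e \<in> E. v \<in> e} \<le> 3"
    and eE: "e \<in> E"
  shows "finite (clique_verts E e)" and "card (clique_verts E e) \<le> 4"
proof -
  obtain u v where uv: "e = {u, v}" "u \<in> V" "v \<in> V"
    using sg eE by (auto simp: simple_graph_def)
  define N where "N w = {g \<in> E. w \<in> g} - {e}" for w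
  have fin_N: "finite (N w)" for w using simple_graph_finite_edges[OF sg] by (simp add: N_def)
  have card_N: "card (N w) \<le> 2" if "w \<in> V" "w \<in> e" for w
    using subcubic[rule_format, OF that(1)] that(2) eE simple_graph_finite_edges[OF sg]
    by (simp add: N_def)
  have sub: "clique_verts E e \<subseteq> (\<lambda>g. {e, g}) ` (N u \<union> N v)"
  proof
    fix f assume "f \<in> clique_verts E e"
    then have f: "f \<in> line_edges E" "e \<in> f" by (auto simp: clique_verts_def)
    obtain g where g: "g \<noteq> e" "f = {e, g}"
      using card_2_other_element[OF line_edges_card[OF f(1)] f(2)] by blast
    then have "g \<in> E" "g \<inter> e \<noteq> {}" using f(1) by (auto simp: doubleton_in_line_edges_iff)
    then have "g \<in> N u \<union> N v" using g(1) uv(1) by (auto simp: N_def)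
    with g(2) show "f \<in> (\<lambda>g. {e, g}) ` (N u \<union> N v)" by blast
  qed
  show "finite (clique_verts E e)" using finite_subset[OF sub] fin_N by blast
  have "card (clique_verts E e) \<le> card ((\<lambda>g. {e, g}) ` (N u \<union> N v))"
    using sub fin_N by (intro card_mono) auto
  also have "\<dots> \<le> card (N u \<union> N v)" using fin_N by (intro card_image_le) auto
  also have "\<dots> \<le> card (N u) + card (N v)" by (rule card_Un_le)
  also have "\<dots> \<le> 4" using card_N[of u] card_N[of v] uv by simp
  finally show "card (clique_verts E e) \<le> 4" .
qed

lemma self_intersection_if_three_vertices_in_component:
  assumes C: "C \<in> Gamma E \<Lambda>" and fin: "finite (clique_verts E e)"
    and le_4: "card (clique_verts E e) \<le> 4" and ge_3: "3 \<le> card (clique_verts E e \<inter> C)"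
  shows "self_intersection E \<Lambda> e C"
  unfolding self_intersection_def
proof (intro ballI impI)
  fix a assume a: "a \<in> clique_edges E e" "\<Lambda> a"
  then have a_open: "a \<in> open_edges E \<Lambda>" and a_sub: "a \<subseteq> clique_verts E e"
    by (auto simp: clique_edges_def open_edges_def)
  have card_a: "card a = 2" using line_edges_card[OF open_edge_in_line_edges[OF a_open]] .
  show "a \<subseteq> C"
  proof (rule ccontr)
    assume "\<not> a \<subseteq> C"
    then have "a \<inter> C = {}"
      using Gamma_closed[OF C] a_open card_2_iff[THEN iffD1, OF card_a]
      by (auto simp: insert_commute)
    then have "card (a \<union> (clique_verts E e \<inter> C)) = card a + card (clique_verts E e \<inter> C)"
      using fin a_sub by (intro card_Un_disjoint) (auto intro: finite_subset)
    moreover have "card (a \<union> (clique_verts E e \<inter> C)) \<le> card (clique_verts E e)"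
      using fin a_sub by (intro card_mono) auto
    ultimately show False using card_a ge_3 le_4 by simp
  qed
qed

section \<open>Projected walks\<close>

lemma cyclic_order_length_ge_3:
  assumes "valid_labeling E \<Lambda>" "C \<in> Gamma E \<Lambda>" "cyclic_order E \<Lambda> C fs"
  shows "3 \<le> length fs"
proof -
  have "set fs = C" "distinct fs" using assms(3) by (simp_all add: cyclic_order_def)
  moreover obtain x y z where "{x, y, z} \<subseteq> C" "x \<noteq> y" "x \<noteq> z" "y \<noteq> z"
    using Gamma_three_vertices[OF assms(1,2)] by blast
  ultimately show ?thesis
    using card_ge_3_if_three_distinct[of C x y z] distinct_card[of fs] by auto
qed

lemma cyclic_order_open_edge:
  assumes "cyclic_order E \<Lambda> C fs" "fs \<noteq> []"
  shows "{cyclic_nth fs j, cyclic_nth fs (Suc j)} \<in> open_edges E \<Lambda>"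
proof -
  have "j mod length fs < length fs" using assms(2) by simp
  then have "{fs ! (j mod length fs), fs ! (Suc (j mod length fs) mod length fs)}
      \<in> open_edges E \<Lambda>"
    using assms(1) by (simp add: cyclic_order_def)
  then show ?thesis by (simp add: cyclic_nth_def mod_Suc_eq)
qed

lemma cyclic_order_vertex_in_line_edges:
  assumes "cyclic_order E \<Lambda> C fs" "fs \<noteq> []"
  shows "cyclic_nth fs j \<in> line_edges E"
  using open_edge_in_line_edges[OF cyclic_order_open_edge[OF assms, of j]]
  by (simp add: doubleton_in_line_edges_iff)

lemma length_projected_walk [simp]: "length (projected_walk fs) = length fs"
  by (simp add: projected_walk_def)

lemma projected_walk_Nil_iff [simp]: "projected_walk fs = [] \<longleftrightarrow> fs = []"
  by (simp add: projected_walk_def)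

lemma cyclic_nth_projected_walk:
  "fs \<noteq> [] \<Longrightarrow>
    cyclic_nth (projected_walk fs) j = (THE e. e \<in> cyclic_nth fs j \<inter> cyclic_nth fs (Suc j))"
  by (simp add: projected_walk_def cyclic_nth_def mod_Suc_eq)

lemma cyclic_order_shared_edge:
  assumes "cyclic_order E \<Lambda> C fs" "fs \<noteq> []"
  shows "cyclic_nth fs j \<inter> cyclic_nth fs (Suc j) = {cyclic_nth (projected_walk fs) j}"
proof -
  have "{cyclic_nth fs j, cyclic_nth fs (Suc j)} \<in> line_edges (line_edges E)"
    using open_edge_in_line_edges[OF cyclic_order_open_edge[OF assms]] .
  then have f: "cyclic_nth fs j \<in> line_edges E" "cyclic_nth fs (Suc j) \<in> line_edges E"
      "cyclic_nth fs j \<noteq> cyclic_nth fs (Suc j)" "cyclic_nth fs j \<inter> cyclic_nth fs (Suc j) \<noteq> {}"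
    by (simp_all add: doubleton_in_line_edges_iff)
  obtain e where e: "cyclic_nth fs j \<inter> cyclic_nth fs (Suc j) = {e}"
    using card_2_inter_singleton[OF line_edges_card[OF f(1)] line_edges_card[OF f(2)] f(3,4)]
    by blast
  moreover have "(THE x. x \<in> cyclic_nth fs j \<inter> cyclic_nth fs (Suc j)) = e"
    unfolding e by simp
  ultimately show ?thesis unfolding cyclic_nth_projected_walk[OF assms(2)] by (simp only:)
qed

lemma projected_walk_distinct:
  assumes sg: "simple_graph V E" and subcubic: "\<forall>v\<in>V. card {e \<in> E. v \<in> e} \<le> 3"
    and C: "C \<in> Gamma E \<Lambda>" and order: "cyclic_order E \<Lambda> C fs" and len: "3 \<le> length fs"
    and no_self_intersection: "\<not> (\<exists>e\<in>E. self_intersection E \<Lambda> e C)"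
  shows "distinct (projected_walk fs)"
proof -
  let ?\<epsilon> = "cyclic_nth (projected_walk fs)" and ?m = "length fs"
  have ne: "fs \<noteq> []" using len by auto
  have dist: "distinct fs" and set_fs: "set fs = C" using order by (simp_all add: cyclic_order_def)
  have "?\<epsilon> a \<noteq> ?\<epsilon> b" if "a mod ?m \<noteq> b mod ?m" for a b
  proof
    assume eq: "?\<epsilon> a = ?\<epsilon> b"
    define e where "e = ?\<epsilon> a"
    let ?S = "{cyclic_nth fs a, cyclic_nth fs (Suc a), cyclic_nth fs b, cyclic_nth fs (Suc b)}"
    have e_in:
      "e \<in> cyclic_nth fs a \<inter> cyclic_nth fs (Suc a)" "e \<in> cyclic_nth fs b \<inter> cyclic_nth fs (Suc b)"
      unfolding cyclic_order_shared_edge[OF order ne] e_def eq by simp_all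
    have vertex: "cyclic_nth fs j \<in> line_edges E \<inter> C" for j
      using cyclic_order_vertex_in_line_edges[OF order ne] cyclic_nth_in_set[OF ne] set_fs by simp
    have eE: "e \<in> E"
      using line_edges_subset[OF cyclic_order_vertex_in_line_edges[OF order ne]] e_in(1) by blast
    note clique = clique_verts_card_le_4[OF sg subcubic eE]
    have "?S \<subseteq> clique_verts E e \<inter> C" using vertex e_in by (auto simp: clique_verts_def)
    then have "card ?S \<le> card (clique_verts E e \<inter> C)" using clique(1) by (intro card_mono) auto
    then have "3 \<le> card (clique_verts E e \<inter> C)"
      using card_consecutive_pairs_ge_3[OF dist len that] by linarith
    then have "self_intersection E \<Lambda> e C"
      using self_intersection_if_three_vertices_in_component[OF C clique] by blast
    with eE no_self_intersection show False by blast
  qed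
  then show ?thesis
    unfolding distinct_conv_nth length_projected_walk by (simp add: cyclic_nth_eq_nth[symmetric])
qed

lemma projected_walk_subset:
  assumes order: "cyclic_order E \<Lambda> C fs" and ne: "fs \<noteq> []"
  shows "set (projected_walk fs) \<subseteq> E"
proof
  fix e assume "e \<in> set (projected_walk fs)"
  then obtain j where "e = cyclic_nth (projected_walk fs) j"
    by (metis in_set_conv_nth cyclic_nth_eq_nth)
  then have "e \<in> cyclic_nth fs j" using cyclic_order_shared_edge[OF order ne, of j] by blast
  then show "e \<in> E"
    using line_edges_subset[OF cyclic_order_vertex_in_line_edges[OF order ne]] by blast
qed

lemma projected_walk_vertex_eq:
  assumes order: "cyclic_order E \<Lambda> C fs" and len: "3 \<le> length fs"
    and dist: "distinct (projected_walk fs)"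
  shows "cyclic_nth fs (Suc j) =
    {cyclic_nth (projected_walk fs) j, cyclic_nth (projected_walk fs) (Suc j)}"
proof -
  have ne: "fs \<noteq> []" using len by auto
  have "cyclic_nth (projected_walk fs) j \<noteq> cyclic_nth (projected_walk fs) (Suc j)"
    using cyclic_nth_eq_iff[OF dist] Suc_mod_neq_self[of "length fs" j] len ne by simp
  then show ?thesis
    using card_2_eq_doubleton[OF line_edges_card[OF cyclic_order_vertex_in_line_edges[OF order ne]]]
      cyclic_order_shared_edge[OF order ne, of j] cyclic_order_shared_edge[OF order ne, of "Suc j"]
    by blast
qed

lemma projected_walk_consecutive_meet:
  assumes "cyclic_order E \<Lambda> C fs" "3 \<le> length fs" "distinct (projected_walk fs)"
  shows "cyclic_nth (projected_walk fs) j \<inter> cyclic_nth (projected_walk fs) (Suc j) \<noteq> {}"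
proof -
  have "fs \<noteq> []" using assms(2) by auto
  from cyclic_order_vertex_in_line_edges[OF assms(1) this, of "Suc j"] show ?thesis
    unfolding projected_walk_vertex_eq[OF assms] by (simp add: doubleton_in_line_edges_iff)
qed

lemma projected_walk_no_common_vertex:
  assumes order: "cyclic_order E \<Lambda> C fs" and len: "3 \<le> length fs"
    and dist: "distinct (projected_walk fs)"
  shows "cyclic_nth (projected_walk fs) j \<inter> cyclic_nth (projected_walk fs) (Suc j)
    \<inter> cyclic_nth (projected_walk fs) (Suc (Suc j)) = {}"
proof (rule ccontr)
  let ?\<epsilon> = "cyclic_nth (projected_walk fs)"
  assume "?\<epsilon> j \<inter> ?\<epsilon> (Suc j) \<inter> ?\<epsilon> (Suc (Suc j)) \<noteq> {}"
  have ne: "fs \<noteq> []" and ne_pw: "projected_walk fs \<noteq> []" using len by auto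
  have "?\<epsilon> i \<in> E" for i
    using projected_walk_subset[OF order ne] cyclic_nth_in_set[OF ne_pw] by blast
  moreover have
    "?\<epsilon> j \<noteq> ?\<epsilon> (Suc j)" "?\<epsilon> (Suc j) \<noteq> ?\<epsilon> (Suc (Suc j))" "?\<epsilon> j \<noteq> ?\<epsilon> (Suc (Suc j))"
    unfolding cyclic_nth_eq_iff[OF dist ne_pw] length_projected_walk
    using Suc_mod_neq_self[of "length fs"] Suc_Suc_mod_neq_self[OF len] len
    by (simp_all add: not_sym)
  ultimately have triangle: "{?\<epsilon> j, ?\<epsilon> (Suc j)} \<in> line_edges E"
      "{?\<epsilon> (Suc j), ?\<epsilon> (Suc (Suc j))} \<in> line_edges E" "{?\<epsilon> j, ?\<epsilon> (Suc (Suc j))} \<in> line_edges E"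
    using \<open>?\<epsilon> j \<inter> ?\<epsilon> (Suc j) \<inter> ?\<epsilon> (Suc (Suc j)) \<noteq> {}\<close>
    by (auto simp: doubleton_in_line_edges_iff)
  have "{cyclic_nth fs (Suc j), cyclic_nth fs (Suc (Suc j))} \<in> L2_edges E"
    using cyclic_order_open_edge[OF order ne] by (simp add: open_edges_def)
  then show False
    using L2_edge_not_in_triangle[OF triangle] projected_walk_vertex_eq[OF order len dist] by simp
qed

theorem lemma2p16:
  fixes V :: "'a set" and E :: "'a set set" and \<Lambda> :: "'a set set set \<Rightarrow> bool"
  assumes "simple_graph V E" and "graph_connected V E" and "bridgeless V E"
    and "triangle_free E" and "cubic V E"
    and "valid_labeling E \<Lambda>"
    and "\<not> (\<exists>C\<in>Gamma E \<Lambda>. \<exists>e\<in>E. self_intersection E \<Lambda> e C)"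
  shows "\<forall>C\<in>Gamma E \<Lambda>. \<forall>fs. cyclic_order E \<Lambda> C fs \<longrightarrow> is_cycle V E (projected_walk fs)"
proof (intro ballI allI impI)
  fix C fs assume C: "C \<in> Gamma E \<Lambda>" and order: "cyclic_order E \<Lambda> C fs"
  have subcubic: "\<forall>v\<in>V. card {e \<in> E. v \<in> e} \<le> 3"
    using \<open>cubic V E\<close> by (simp add: cubic_def)
  have len: "3 \<le> length fs" using cyclic_order_length_ge_3[OF \<open>valid_labeling E \<Lambda>\<close> C order] .
  have dist: "distinct (projected_walk fs)"
    using projected_walk_distinct[OF \<open>simple_graph V E\<close> subcubic C order len] assms(7) C by blast
  show "is_cycle V E (projected_walk fs)"
  proof (rule closed_trail_is_cycle_if_subcubic[OF \<open>simple_graph V E\<close> subcubic])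
    show "3 \<le> length (projected_walk fs)" using len by simp
    show "set (projected_walk fs) \<subseteq> E" using projected_walk_subset[OF order] len by force
  qed (use dist projected_walk_consecutive_meet[OF order len dist]
        projected_walk_no_common_vertex[OF order len dist] in auto)
qed

end
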